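(* Let $V$ be an abelian subgroup of a finite group $G$, and let $g\in G$ be an element normalizing $V$ whose order is coprime to $|V|$. Then $$[V,g]=\mathscr E_{V\langle g\rangle}(g)=\mathscr R_{V\langle g\rangle}(g).$$
   Context: Commutators: $a^b=b^{-1}ab$, $[a,b]=a^{-1}b^{-1}ab$, and $[a,{}_nb]=[\dots[[a,b],b],\dots,b]$ with $b$ repeated $n$ times; $[V,g]$ is the subgroup generated by all $[v,g]$, $v\in V$. For a finite group $H$ and $g\in H$, the right Engel sink $\mathscr R_H(g)$ is the smallest set $\mathscr R\subseteq H$ such that for every $x\in H$ there is $r(x)\ge1$ with $[g,{}_nx]\in\mathscr R$ for all $n\ge r(x)$; the left Engel sink $\mathscr E_H(g)$ is the smallest set $\mathscr E\subseteq H$ such that for every $x\in H$ there is $l(x)\ge1$ with $[x,{}_ng]\in\mathscr E$ for all $n\ge l(x)$ (intersections of such sets are again such sets). *)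

theory Defs
  imports "HOL-Algebra.Algebra"
begin

definition comm :: "('a, 'b) monoid_scheme \<Rightarrow> 'a \<Rightarrow> 'a \<Rightarrow> 'a" where
  "comm G a b = inv\<^bsub>G\<^esub> a \<otimes>\<^bsub>G\<^esub> inv\<^bsub>G\<^esub> b \<otimes>\<^bsub>G\<^esub> a \<otimes>\<^bsub>G\<^esub> b"

primrec iter_comm :: "('a, 'b) monoid_scheme \<Rightarrow> 'a \<Rightarrow> 'a \<Rightarrow> nat \<Rightarrow> 'a" where
  "iter_comm G a b 0 = a"
| "iter_comm G a b (Suc n) = comm G (iter_comm G a b n) b"

definition right_engel_sink :: "('a, 'b) monoid_scheme \<Rightarrow> 'a set \<Rightarrow> 'a \<Rightarrow> 'a set" where
  "right_engel_sink G H g = \<Inter> {R. R \<subseteq> H \<and>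
      (\<forall>x\<in>H. \<exists>r\<ge>1. \<forall>n\<ge>r. iter_comm G g x n \<in> R)}"

definition left_engel_sink :: "('a, 'b) monoid_scheme \<Rightarrow> 'a set \<Rightarrow> 'a \<Rightarrow> 'a set" where
  "left_engel_sink G H g = \<Inter> {E. E \<subseteq> H \<and>
      (\<forall>x\<in>H. \<exists>l\<ge>1. \<forall>n\<ge>l. iter_comm G x g n \<in> E)}"

definition comm_subgroup :: "('a, 'b) monoid_scheme \<Rightarrow> 'a set \<Rightarrow> 'a \<Rightarrow> 'a set" where
  "comm_subgroup G V g = generate G {comm G v g | v. v \<in> V}"

end

theory Submission
  imports Defs "HOL-Combinatorics.Permutations"
begin

(*
  The map v |-> [v,g] = v^-1 v^g is an endomorphism of the abelian group V with image [V,g], and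
  it commutes with conjugation by powers of g. Coprimality makes it injective on [V,g]: if
  w = [v,g] and [w,g] = 1, then v^(g^i) = v w^i, so the order of w divides both the order of g
  and |V|. Hence the map permutes the finite set [V,g], and every element of [V,g] returns to
  itself after arbitrarily many steps. Every element of V<g> has the form g^k v, and the
  identities [g^k v, g] = [v,g], [g, g^k v] = [v^-1,g] and [u, g^k v] = u^-1 u^(g^k) (u in V)
  show that both Engel sequences of g enter [V,g] after one step and stay there, while
  recurrence puts every element of [V,g] into every sink.
*)

lemma funpow_recurrent_on_finite:
  assumes "finite A" and "inj_on f A" and "f ` A \<subseteq> A" and "x \<in> A"
  shows "\<exists>n\<ge>l. (f ^^ n) x = x"
proof -
  let ?p = "restrict_id f A"
  have "bij_betw f A A"
    using assms(1-3) endo_inj_surj by (simp add: bij_betw_def)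
  then have "permutation ?p"
    using assms(1) permutes_restrict_id permutes_imp_permutation by blast
  then obtain m where m: "m > 0" "(?p ^^ m) x = x"
    by (metis permutation_self)
  have "(f ^^ n) x \<in> A \<and> (?p ^^ n) x = (f ^^ n) x" for n
    by (induction n) (use assms(3,4) in auto)
  with m have period: "(f ^^ m) x = x" by simp
  have "(f ^^ (m * k)) x = x" for k
    by (induction k) (simp_all add: funpow_add period)
  moreover have "m * l \<ge> l" using m by simp
  ultimately show ?thesis by blast
qed

lemma smallest_eventual_sink_eq:
  fixes c :: "'a \<Rightarrow> nat \<Rightarrow> 'a"
  assumes "S \<subseteq> H"
    and "\<forall>x\<in>H. \<exists>l\<ge>1. \<forall>n\<ge>l. c x n \<in> S"
    and "\<forall>s\<in>S. \<exists>x\<in>H. \<forall>l. \<exists>n\<ge>l. c x n = s"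
  shows "\<Inter> {E. E \<subseteq> H \<and> (\<forall>x\<in>H. \<exists>l\<ge>1. \<forall>n\<ge>l. c x n \<in> E)} = S"
proof (rule antisym)
  show "\<Inter> {E. E \<subseteq> H \<and> (\<forall>x\<in>H. \<exists>l\<ge>1. \<forall>n\<ge>l. c x n \<in> E)} \<subseteq> S"
    using assms(1,2) by (intro Inter_lower CollectI conjI)
  show "S \<subseteq> \<Inter> {E. E \<subseteq> H \<and> (\<forall>x\<in>H. \<exists>l\<ge>1. \<forall>n\<ge>l. c x n \<in> E)}"
  proof (intro subsetI InterI)
    fix s E assume "s \<in> S" and "E \<in> {E. E \<subseteq> H \<and> (\<forall>x\<in>H. \<exists>l\<ge>1. \<forall>n\<ge>l. c x n \<in> E)}"
    then have sink: "\<forall>x\<in>H. \<exists>l\<ge>1. \<forall>n\<ge>l. c x n \<in> E" by simp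
    obtain x where "x \<in> H" and recurrent: "\<forall>l. \<exists>n\<ge>l. c x n = s"
      using assms(3) \<open>s \<in> S\<close> by blast
    then obtain l where "\<forall>n\<ge>l. c x n \<in> E" using sink by blast
    moreover obtain n where "n \<ge> l" and "c x n = s" using recurrent by blast
    ultimately show "s \<in> E" by blast
  qed
qed

context group
begin

lemma inv_mult_cancel_left:
  "\<lbrakk>x \<in> carrier G; y \<in> carrier G\<rbrakk> \<Longrightarrow> inv x \<otimes> (x \<otimes> y) = y"
  by (simp add: m_assoc[symmetric])

lemma mult_inv_cancel_left:
  "\<lbrakk>x \<in> carrier G; y \<in> carrier G\<rbrakk> \<Longrightarrow> x \<otimes> (inv x \<otimes> y) = y"
  by (simp add: m_assoc[symmetric])

lemma conj_mult:
  "\<lbrakk>a \<in> carrier G; b \<in> carrier G; y \<in> carrier G\<rbrakk>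
   \<Longrightarrow> inv y \<otimes> (a \<otimes> b) \<otimes> y = (inv y \<otimes> a \<otimes> y) \<otimes> (inv y \<otimes> b \<otimes> y)"
  by (simp add: m_assoc mult_inv_cancel_left)

lemma conj_nat_pow:
  "\<lbrakk>x \<in> carrier G; y \<in> carrier G\<rbrakk> \<Longrightarrow> inv y \<otimes> x [^] (i::nat) \<otimes> y = (inv y \<otimes> x \<otimes> y) [^] i"
  by (induction i) (simp_all add: conj_mult)

lemma conj_comm:
  "\<lbrakk>x \<in> carrier G; y \<in> carrier G; z \<in> carrier G\<rbrakk>
   \<Longrightarrow> inv z \<otimes> comm G x y \<otimes> z = comm G (inv z \<otimes> x \<otimes> z) (inv z \<otimes> y \<otimes> z)"
  by (simp add: comm_def conj_mult inv_mult_group m_assoc inv_mult_cancel_left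
      mult_inv_cancel_left)

lemma conj_by_nat_pow_closed:
  assumes "S \<subseteq> carrier G" and "y \<in> carrier G" and "\<And>x. x \<in> S \<Longrightarrow> inv y \<otimes> x \<otimes> y \<in> S"
    and "x \<in> S"
  shows "inv (y [^] (k::nat)) \<otimes> x \<otimes> y [^] k \<in> S"
proof (induction k)
  case 0
  then show ?case using assms(1,4) by auto
next
  case (Suc k)
  have "x \<in> carrier G" using assms(1,4) by blast
  then have "inv (y [^] Suc k) \<otimes> x \<otimes> y [^] Suc k
      = inv y \<otimes> (inv (y [^] k) \<otimes> x \<otimes> y [^] k) \<otimes> y"
    using assms(2) by (simp add: m_assoc inv_mult_group)
  then show ?case using Suc assms(3) by simp
qed

lemma inv_eq_pow_ord_minus_one:
  assumes "finite (carrier G)" and "x \<in> carrier G"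
  shows "inv x = x [^] (ord x - 1)"
proof (rule inv_equality)
  have "x [^] (ord x - 1) \<otimes> x = x [^] Suc (ord x - 1)" by simp
  also have "Suc (ord x - 1) = ord x" using ord_ge_1[OF assms] by simp
  finally show "x [^] (ord x - 1) \<otimes> x = \<one>" using assms(2) by simp
qed (use assms(2) in simp_all)

end

locale normalized_abelian_subgroup = group G for G (structure) +
  fixes V :: "'a set" and g :: 'a
  assumes V_subgroup: "subgroup V G"
    and V_comm: "\<And>a b. \<lbrakk>a \<in> V; b \<in> V\<rbrakk> \<Longrightarrow> a \<otimes> b = b \<otimes> a"
    and g_carrier: "g \<in> carrier G"
    and conj_in_V: "\<And>v. v \<in> V \<Longrightarrow> inv g \<otimes> v \<otimes> g \<in> V"
begin

definition comm_g :: "'a \<Rightarrow> 'a" where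
  "comm_g v = comm G v g"

lemma V_carrier: "v \<in> V \<Longrightarrow> v \<in> carrier G"
  using subgroup.mem_carrier[OF V_subgroup] .

lemma conj_pow_in_V: "v \<in> V \<Longrightarrow> inv (g [^] (k::nat)) \<otimes> v \<otimes> g [^] k \<in> V"
  using conj_by_nat_pow_closed[OF subgroup.subset[OF V_subgroup] g_carrier conj_in_V] .

lemma comm_g_eq: "v \<in> carrier G \<Longrightarrow> comm_g v = inv v \<otimes> (inv g \<otimes> v \<otimes> g)"
  using g_carrier by (simp add: comm_g_def comm_def m_assoc)

lemma comm_g_in_V: "v \<in> V \<Longrightarrow> comm_g v \<in> V"
  using V_carrier conj_in_V subgroup.m_closed[OF V_subgroup] subgroup.m_inv_closed[OF V_subgroup]
  by (simp add: comm_g_eq)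

lemma comm_g_mult:
  assumes a: "a \<in> V" and b: "b \<in> V"
  shows "comm_g (a \<otimes> b) = comm_g a \<otimes> comm_g b"
proof -
  define a' where "a' = inv g \<otimes> a \<otimes> g"
  define b' where "b' = inv g \<otimes> b \<otimes> g"
  have V: "a' \<in> V" "b' \<in> V" "inv a \<otimes> a' \<in> V" "inv b \<in> V"
    using a b conj_in_V subgroup.m_closed[OF V_subgroup] subgroup.m_inv_closed[OF V_subgroup]
    by (auto simp: a'_def b'_def)
  have c: "a \<in> carrier G" "b \<in> carrier G" "a' \<in> carrier G" "b' \<in> carrier G"
    using a b V V_carrier by auto
  have "comm_g (a \<otimes> b) = inv b \<otimes> (inv a \<otimes> a') \<otimes> b'"
    using c g_carrier
    by (simp add: comm_g_eq conj_mult a'_def b'_def inv_mult_group m_assoc mult_inv_cancel_left)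
  also have "inv b \<otimes> (inv a \<otimes> a') = (inv a \<otimes> a') \<otimes> inv b"
    using V V_comm by blast
  also have "inv a \<otimes> a' \<otimes> inv b \<otimes> b' = comm_g a \<otimes> comm_g b"
    using c by (simp add: comm_g_eq a'_def b'_def m_assoc)
  finally show ?thesis .
qed

lemma group_hom_comm_g: "group_hom (G\<lparr>carrier := V\<rparr>) G comm_g"
proof -
  have "comm_g \<in> hom (G\<lparr>carrier := V\<rparr>) G"
    using comm_g_in_V V_carrier comm_g_mult by (intro homI) auto
  then show ?thesis
    using subgroup.subgroup_is_group[OF V_subgroup is_group]
    by (simp add: group_hom_def group_hom_axioms_def is_group)
qed

lemma subgroup_comm_g_image: "subgroup (comm_g ` V) G"
  using group_hom.img_is_subgroup[OF group_hom_comm_g] by simp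

lemma comm_g_image_subset_V: "comm_g ` V \<subseteq> V"
  using comm_g_in_V by blast

lemma iter_comm_eq_funpow_comm_g: "iter_comm G x g n = (comm_g ^^ n) x"
  by (induction n) (simp_all add: comm_g_def)

lemma funpow_comm_g_in_image: "w \<in> comm_g ` V \<Longrightarrow> (comm_g ^^ n) w \<in> comm_g ` V"
  using comm_g_image_subset_V by (induction n) auto

lemma comm_subgroup_eq_image: "comm_subgroup G V g = comm_g ` V"
proof -
  have "{comm G v g | v. v \<in> V} = comm_g ` V"
    by (auto simp: comm_g_def)
  then show ?thesis
    unfolding comm_subgroup_def
    using generate_subgroup_incl[OF subset_refl subgroup_comm_g_image]
      generate.incl[of _ "comm_g ` V" G]
    by auto
qed

lemma comm_g_inv: "v \<in> V \<Longrightarrow> comm_g (inv v) = inv (comm_g v)"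
  using group_hom.hom_inv[OF group_hom_comm_g, of v]
  by (simp add: m_inv_consistent[OF V_subgroup] subgroup.m_inv_closed[OF V_subgroup])

lemma g_pow_commute: "g [^] (k::nat) \<otimes> g = g \<otimes> g [^] k"
  using g_carrier by (metis nat_pow_Suc nat_pow_Suc2)

lemma g_pow_mult_commute: "x \<in> carrier G \<Longrightarrow> g \<otimes> (g [^] (k::nat) \<otimes> x) = g [^] k \<otimes> (g \<otimes> x)"
  using g_carrier by (simp add: m_assoc[symmetric] g_pow_commute)

lemma conj_g_pow_fixes_g: "inv (g [^] (k::nat)) \<otimes> g \<otimes> g [^] k = g"
  using g_carrier by (simp add: m_assoc g_pow_commute[symmetric] inv_mult_cancel_left)

lemma conj_pow_comm_g:
  "v \<in> carrier G \<Longrightarrow>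
    inv (g [^] (k::nat)) \<otimes> comm_g v \<otimes> g [^] k = comm_g (inv (g [^] k) \<otimes> v \<otimes> g [^] k)"
  using conj_comm[of v g "g [^] k"] g_carrier by (simp add: comm_g_def conj_g_pow_fixes_g)

lemma conj_pow_in_comm_g_image:
  "u \<in> comm_g ` V \<Longrightarrow> inv (g [^] (k::nat)) \<otimes> u \<otimes> g [^] k \<in> comm_g ` V"
  using conj_pow_comm_g conj_pow_in_V V_carrier by auto

lemma conj_pow_eq_mult_pow:
  assumes v: "v \<in> V" and fixed: "inv g \<otimes> comm_g v \<otimes> g = comm_g v"
  shows "inv (g [^] (i::nat)) \<otimes> v \<otimes> g [^] i = v \<otimes> comm_g v [^] i"
proof (induction i)
  case 0
  then show ?case using v V_carrier by simp
next
  case (Suc i)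
  let ?w = "comm_g v"
  have c: "v \<in> carrier G" "?w \<in> carrier G" using v comm_g_in_V V_carrier by auto
  have "inv (g [^] Suc i) \<otimes> v \<otimes> g [^] Suc i
      = inv g \<otimes> (inv (g [^] i) \<otimes> v \<otimes> g [^] i) \<otimes> g"
    using c g_carrier by (simp add: m_assoc inv_mult_group)
  also have "\<dots> = (inv g \<otimes> v \<otimes> g) \<otimes> (inv g \<otimes> ?w \<otimes> g) [^] i"
    using Suc c g_carrier by (simp add: conj_mult conj_nat_pow)
  also have "inv g \<otimes> v \<otimes> g = v \<otimes> ?w"
    using c g_carrier by (simp add: comm_g_eq m_assoc mult_inv_cancel_left)
  also have "v \<otimes> ?w \<otimes> (inv g \<otimes> ?w \<otimes> g) [^] i = v \<otimes> (?w \<otimes> ?w [^] i)"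
    using c fixed by (simp add: m_assoc)
  also have "?w \<otimes> ?w [^] i = ?w [^] Suc i"
    by (rule nat_pow_Suc2[OF c(2), symmetric])
  finally show ?case .
qed

lemma pow_card_V: "v \<in> V \<Longrightarrow> v [^] card V = \<one>"
  using group.pow_order_eq_1[OF subgroup.subgroup_is_group[OF V_subgroup is_group], of v]
    nat_pow_consistent[of v "card V" V]
  by (simp add: order_def)

lemma inv_g_pow_commute: "inv (g [^] (k::nat)) \<otimes> inv g = inv g \<otimes> inv (g [^] k)"
  using g_carrier by (simp add: inv_mult_group[symmetric] g_pow_commute)

lemma comm_pow_mult_g:
  assumes "v \<in> V"
  shows "comm G (g [^] (k::nat) \<otimes> v) g = comm_g v"
proof -
  have c: "v \<in> carrier G" using assms V_carrier by blast
  have "comm G (g [^] k \<otimes> v) g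
      = inv v \<otimes> ((inv (g [^] k) \<otimes> inv g) \<otimes> (g [^] k \<otimes> (v \<otimes> g)))"
    using c g_carrier by (simp add: comm_def inv_mult_group m_assoc)
  also have "\<dots> = inv v \<otimes> (inv g \<otimes> (v \<otimes> g))"
    using c g_carrier by (simp add: inv_g_pow_commute m_assoc inv_mult_cancel_left)
  finally show ?thesis using c g_carrier by (simp add: comm_g_eq m_assoc)
qed

lemma comm_g_pow_mult:
  assumes "v \<in> V"
  shows "comm G g (g [^] (k::nat) \<otimes> v) = comm_g (inv v)"
proof -
  have c: "v \<in> carrier G" "inv v \<in> V"
    using assms V_carrier subgroup.m_inv_closed[OF V_subgroup] by auto
  have "comm G g (g [^] k \<otimes> v) = (inv g \<otimes> inv v \<otimes> g) \<otimes> v"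
    using c g_carrier
    by (simp add: comm_def inv_mult_group m_assoc g_pow_mult_commute inv_mult_cancel_left)
  also have "\<dots> = v \<otimes> (inv g \<otimes> inv v \<otimes> g)"
    using V_comm assms c conj_in_V by blast
  finally show ?thesis using c g_carrier by (simp add: comm_g_eq)
qed

lemma comm_pow_mult:
  assumes "u \<in> V" and "v \<in> V"
  shows "comm G u (g [^] (k::nat) \<otimes> v) = inv u \<otimes> (inv (g [^] k) \<otimes> u \<otimes> g [^] k)"
proof -
  let ?u = "inv (g [^] k) \<otimes> u \<otimes> g [^] k"
  have c: "u \<in> carrier G" "v \<in> carrier G" "?u \<in> V"
    using assms V_carrier conj_pow_in_V by auto
  have "comm G u (g [^] k \<otimes> v) = inv u \<otimes> (inv v \<otimes> (?u \<otimes> v))"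
    using c g_carrier by (simp add: comm_def inv_mult_group m_assoc)
  also have "?u \<otimes> v = v \<otimes> ?u" using V_comm assms c by blast
  finally show ?thesis using c V_carrier by (simp add: inv_mult_cancel_left)
qed

lemma iter_comm_pow_mult_g:
  "v \<in> V \<Longrightarrow> iter_comm G (g [^] (k::nat) \<otimes> v) g (Suc m) = (comm_g ^^ m) (comm_g v)"
  unfolding iter_comm_eq_funpow_comm_g funpow_Suc_right
  using comm_pow_mult_g by (simp add: comm_g_def)

lemma iter_comm_g_mult_inv:
  assumes b: "b \<in> V"
  shows "iter_comm G g (g \<otimes> inv b) (Suc i) = (comm_g ^^ i) (comm_g b)"
proof (induction i)
  case 0
  then show ?case
    using comm_g_pow_mult[OF subgroup.m_inv_closed[OF V_subgroup b], of 1] b V_carrier g_carrier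
    by simp
next
  case (Suc i)
  let ?u = "(comm_g ^^ i) (comm_g b)"
  have u: "?u \<in> V"
    using funpow_comm_g_in_image b comm_g_image_subset_V by blast
  have "iter_comm G g (g \<otimes> inv b) (Suc (Suc i)) = comm G ?u (g [^] (1::nat) \<otimes> inv b)"
    using Suc g_carrier by simp
  also have "\<dots> = comm_g ?u"
    using comm_pow_mult[OF u subgroup.m_inv_closed[OF V_subgroup b], of 1] u V_carrier g_carrier
    by (simp add: comm_g_eq)
  finally show ?case by simp
qed

end

locale coprime_normalized_abelian_subgroup = normalized_abelian_subgroup +
  assumes finite_carrier: "finite (carrier G)"
    and coprime_ord_card: "coprime (ord g) (card V)"
begin

lemma comm_g_image_kernel_trivial:
  assumes w: "w \<in> comm_g ` V" and trivial: "comm_g w = \<one>"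
  shows "w = \<one>"
proof -
  obtain v where v: "v \<in> V" and w_eq: "w = comm_g v" using w by blast
  have c: "w \<in> carrier G" "v \<in> carrier G" using v w_eq comm_g_in_V V_carrier by auto
  have fixed: "inv g \<otimes> w \<otimes> g = w"
    using trivial c g_carrier by (simp add: comm_g_eq inv_solve_left')
  have "v \<otimes> w [^] ord g = v"
    using conj_pow_eq_mult_pow[OF v, of "ord g"] fixed w_eq c g_carrier by simp
  then have "w [^] ord g = \<one>" using c by simp
  moreover have "w [^] card V = \<one>" using pow_card_V v w_eq comm_g_in_V by blast
  ultimately have "ord w dvd ord g" and "ord w dvd card V" using pow_eq_id c by auto
  then have "ord w = 1" using coprime_ord_card by (meson coprime_common_divisor_nat)
  then show ?thesis using ord_eq_1 c by simp
qed

lemma inj_on_comm_g_image: "inj_on comm_g (comm_g ` V)"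
proof (rule inj_onI)
  fix a b assume a: "a \<in> comm_g ` V" and b: "b \<in> comm_g ` V" and eq: "comm_g a = comm_g b"
  have ab: "a \<in> V" "b \<in> V" "inv b \<in> V" "a \<otimes> inv b \<in> comm_g ` V"
    using a b comm_g_image_subset_V subgroup.m_inv_closed[OF V_subgroup]
      subgroup.m_closed[OF subgroup_comm_g_image] subgroup.m_inv_closed[OF subgroup_comm_g_image]
    by auto
  have "comm_g (a \<otimes> inv b) = comm_g b \<otimes> inv (comm_g b)"
    using ab eq by (simp add: comm_g_mult comm_g_inv)
  then have "a \<otimes> inv b = \<one>"
    using comm_g_image_kernel_trivial ab comm_g_in_V V_carrier by simp
  then show "a = b" using ab V_carrier by (simp add: inv_solve_right')
qed

lemma comm_g_recurrent: "w \<in> comm_g ` V \<Longrightarrow> \<exists>n\<ge>l. (comm_g ^^ n) w = w"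
proof (rule funpow_recurrent_on_finite)
  show "finite (comm_g ` V)"
    using finite_carrier comm_g_image_subset_V V_carrier by (meson finite_subset subsetI)
qed (use inj_on_comm_g_image comm_g_image_subset_V in auto)

lemma generate_insert_g_V_elem:
  "x \<in> generate G (insert g V) \<Longrightarrow> \<exists>k v. v \<in> V \<and> x = g [^] (k::nat) \<otimes> v"
proof (induction rule: generate.induct)
  case one
  then show ?case using subgroup.one_closed[OF V_subgroup] by (intro exI[of _ 0]) auto
next
  case (incl h)
  then consider "h = g" | "h \<in> V" by blast
  then show ?case
  proof cases
    case 1
    then have "h = g [^] (1::nat) \<otimes> \<one>" using g_carrier by simp
    then show ?thesis using subgroup.one_closed[OF V_subgroup] by blast
  next
    case 2
    then have "h = g [^] (0::nat) \<otimes> h" using V_carrier by simp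
    then show ?thesis using 2 by blast
  qed
next
  case (inv h)
  then consider "h = g" | "h \<in> V" by blast
  then show ?case
  proof cases
    case 1
    then have "inv h = g [^] (ord g - 1) \<otimes> \<one>"
      using g_carrier inv_eq_pow_ord_minus_one[OF finite_carrier g_carrier] by simp
    then show ?thesis using subgroup.one_closed[OF V_subgroup] by blast
  next
    case 2
    then have "inv h = g [^] (0::nat) \<otimes> inv h" using V_carrier by simp
    then show ?thesis using 2 subgroup.m_inv_closed[OF V_subgroup] by blast
  qed
next
  case (eng h1 h2)
  then obtain k v l u where v: "v \<in> V" "h1 = g [^] (k::nat) \<otimes> v"
    and u: "u \<in> V" "h2 = g [^] (l::nat) \<otimes> u"
    by blast
  then have "h1 \<otimes> h2 = g [^] (k + l) \<otimes> ((inv (g [^] l) \<otimes> v \<otimes> g [^] l) \<otimes> u)"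
    using V_carrier g_carrier by (simp add: m_assoc nat_pow_mult[symmetric] mult_inv_cancel_left)
  moreover have "(inv (g [^] l) \<otimes> v \<otimes> g [^] l) \<otimes> u \<in> V"
    using v u conj_pow_in_V subgroup.m_closed[OF V_subgroup] by blast
  ultimately show ?case by blast
qed

lemma V_subset_generate_insert_g: "V \<subseteq> generate G (insert g V)"
  by (auto intro: generate.incl)

lemma left_engel_sink_eq: "left_engel_sink G (generate G (insert g V)) g = comm_g ` V"
  unfolding left_engel_sink_def
proof (rule smallest_eventual_sink_eq)
  let ?H = "generate G (insert g V)"
  show "comm_g ` V \<subseteq> ?H"
    using comm_g_image_subset_V V_subset_generate_insert_g by blast
  show "\<forall>x\<in>?H. \<exists>l\<ge>1. \<forall>n\<ge>l. iter_comm G x g n \<in> comm_g ` V"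
  proof (intro ballI exI[of _ 1] conjI allI impI order.refl)
    fix x n assume "x \<in> ?H" and "1 \<le> (n::nat)"
    then obtain m where n: "n = Suc m" by (cases n) auto
    obtain k v where v: "v \<in> V" and x: "x = g [^] (k::nat) \<otimes> v"
      using generate_insert_g_V_elem \<open>x \<in> ?H\<close> by blast
    show "iter_comm G x g n \<in> comm_g ` V"
      unfolding n x iter_comm_pow_mult_g[OF v] using funpow_comm_g_in_image v by simp
  qed
  show "\<forall>w\<in>comm_g ` V. \<exists>x\<in>?H. \<forall>l. \<exists>n\<ge>l. iter_comm G x g n = w"
  proof
    fix w assume w: "w \<in> comm_g ` V"
    then have "w \<in> ?H" using \<open>comm_g ` V \<subseteq> ?H\<close> by blast
    moreover have "\<forall>l. \<exists>n\<ge>l. iter_comm G w g n = w"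
      using comm_g_recurrent[OF w] by (simp add: iter_comm_eq_funpow_comm_g)
    ultimately show "\<exists>x\<in>?H. \<forall>l. \<exists>n\<ge>l. iter_comm G x g n = w" by blast
  qed
qed

lemma iter_g_comm_in_image:
  assumes "x \<in> generate G (insert g V)"
  shows "iter_comm G g x (Suc i) \<in> comm_g ` V"
proof -
  obtain k v where v: "v \<in> V" and x: "x = g [^] (k::nat) \<otimes> v"
    using generate_insert_g_V_elem assms by blast
  show ?thesis
  proof (induction i)
    case 0
    then show ?case using comm_g_pow_mult[OF v] x v subgroup.m_inv_closed[OF V_subgroup] by simp
  next
    case (Suc i)
    let ?u = "iter_comm G g x (Suc i)"
    have "?u \<in> V" using Suc comm_g_image_subset_V by blast
    then have "iter_comm G g x (Suc (Suc i)) = inv ?u \<otimes> (inv (g [^] k) \<otimes> ?u \<otimes> g [^] k)"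
      using comm_pow_mult[OF _ v] x by simp
    then show ?case
      using Suc conj_pow_in_comm_g_image subgroup.m_closed[OF subgroup_comm_g_image]
        subgroup.m_inv_closed[OF subgroup_comm_g_image]
      by simp
  qed
qed

lemma right_engel_sink_eq: "right_engel_sink G (generate G (insert g V)) g = comm_g ` V"
  unfolding right_engel_sink_def
proof (rule smallest_eventual_sink_eq)
  let ?H = "generate G (insert g V)"
  show "comm_g ` V \<subseteq> ?H"
    using comm_g_image_subset_V V_subset_generate_insert_g by blast
  show "\<forall>x\<in>?H. \<exists>l\<ge>1. \<forall>n\<ge>l. iter_comm G g x n \<in> comm_g ` V"
  proof (intro ballI exI[of _ 1] conjI allI impI order.refl)
    fix x n assume "x \<in> ?H" and "1 \<le> (n::nat)"
    then obtain m where "n = Suc m" by (cases n) auto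
    then show "iter_comm G g x n \<in> comm_g ` V" using iter_g_comm_in_image \<open>x \<in> ?H\<close> by simp
  qed
  show "\<forall>w\<in>comm_g ` V. \<exists>x\<in>?H. \<forall>l. \<exists>n\<ge>l. iter_comm G g x n = w"
  proof
    fix w assume w: "w \<in> comm_g ` V"
    then obtain b where b: "b \<in> V" and w_eq: "w = comm_g b" by blast
    have x: "g \<otimes> inv b \<in> ?H"
      using b subgroup.m_inv_closed[OF V_subgroup] by (intro generate.eng generate.incl) auto
    have "\<exists>n\<ge>l. iter_comm G g (g \<otimes> inv b) n = w" for l
    proof -
      obtain n where "n \<ge> l" and "(comm_g ^^ n) w = w" using comm_g_recurrent[OF w] by blast
      then show ?thesis
        using iter_comm_g_mult_inv[OF b, of n] w_eq by (intro exI[of _ "Suc n"]) simp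
    qed
    then show "\<exists>x\<in>?H. \<forall>l. \<exists>n\<ge>l. iter_comm G g x n = w" using x by blast
  qed
qed

end

theorem lemma3p2:
  fixes G (structure) and V :: "'a set" and g :: 'a
  assumes "group G" and "finite (carrier G)"
    and "subgroup V G"
    and "\<forall>a\<in>V. \<forall>b\<in>V. a \<otimes> b = b \<otimes> a"
    and "g \<in> carrier G"
    and "(\<lambda>v. inv g \<otimes> v \<otimes> g) ` V = V"
    and "coprime (group.ord G g) (card V)"
  shows "comm_subgroup G V g = left_engel_sink G (generate G (insert g V)) g
       \<and> left_engel_sink G (generate G (insert g V)) g
         = right_engel_sink G (generate G (insert g V)) g"
proof -
  interpret coprime_normalized_abelian_subgroup G V g
  proof (intro coprime_normalized_abelian_subgroup.intro normalized_abelian_subgroup.intro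
      normalized_abelian_subgroup_axioms.intro coprime_normalized_abelian_subgroup_axioms.intro)
    show "inv g \<otimes> v \<otimes> g \<in> V" if "v \<in> V" for v
      using that assms(6) by blast
  qed (use assms in auto)
  show ?thesis
    using comm_subgroup_eq_image left_engel_sink_eq right_engel_sink_eq by simp
qed

end
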